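(* In Setting (S), for each $0\le i\le \ell-1$, the vertex set of the slice $S_i$, namely $V(G_i)\setminus V(G_{i+1})=H'_{i+1}\setminus(H_1'\cup\cdots\cup H_i')$, is gated in $G$.
   Context: Graphs are finite, simple, connected, undirected; $d$ is shortest-path distance; $I(u,v)=\{x:d(u,x)+d(x,v)=d(u,v)\}$; a graph is median if every triple $x,y,z$ has $|I(x,y)\cap I(y,z)\cap I(z,x)|=1$. A vertex set $H$ is gated if each vertex $v$ has a vertex $g_H(v)\in H$ with $g_H(v)\in I(v,x)$ for all $x\in H$. $\Theta$-classes: classes of the reflexive–transitive closure of the relation on edges "$uv$ and $xy$ are opposite edges of a 4-cycle". Deleting a $\Theta$-class $E_i$ of a median graph leaves two components with vertex sets (halfspaces) $H_i',H_i''$. For $u\ne v$, the ladder set $L_{u,v}$ is the set of $\Theta$-classes separating $u$ from $v$ that contain an edge incident to $u$. Setting (S): $(G,\omega)$ is a median graph with $n\ge 3$ vertices and weights $\omega:V(G)\to\mathbb{N}$ such that every $\Theta$-class satisfies $\min\{|H_i'|,|H_i''|\}<n/(2\log n)$ ($\log$ natural); $H_i'$ denotes the smaller (minority) and $H_i''$ the larger (majority) halfspace. $v_0$ is the unique vertex in all majority halfspaces; $u_{\max}$ maximizes $d(v_0,u)+\omega(u)$ (chosen $=v_0$ if possible) and $u_{\max}\ne v_0$ is assumed. $L(G)=L_{v_0,u_{\max}}=\{E_1,\dots,E_\ell\}$. Large sets: $G_0=G$, $G_{i+1}=G[V(G_i)\setminus H'_{i+1}]$. Slices: $S_i=G[V(G_i)\setminus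 V(G_{i+1})]$ for $0\le i\le\ell-1$. *)

theory Defs
  imports Complex_Main
begin

text \<open>Graphs: vertex set V and a symmetric irreflexive edge relation E \<subseteq> V \<times> V.
Edges as unordered objects are represented as two-element sets.\<close>

definition walk :: "('a \<times> 'a) set \<Rightarrow> 'a list \<Rightarrow> bool" where
  "walk E p \<longleftrightarrow> p \<noteq> [] \<and> (\<forall>i < length p - 1. (p ! i, p ! Suc i) \<in> E)"

definition simple_connected_graph :: "'a set \<Rightarrow> ('a \<times> 'a) set \<Rightarrow> bool" where
  "simple_connected_graph V E \<longleftrightarrow> finite V \<and> E \<subseteq> V \<times> V \<and> sym E \<and> (\<forall>v. (v, v) \<notin> E)
     \<and> (\<forall>u\<in>V. \<forall>v\<in>V. \<exists>p. walk E p \<and> hd p = u \<and> last p = v)"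

definition gdist :: "('a \<times> 'a) set \<Rightarrow> 'a \<Rightarrow> 'a \<Rightarrow> nat" where
  "gdist E u v = (LEAST n. \<exists>p. walk E p \<and> hd p = u \<and> last p = v \<and> length p = Suc n)"

definition interval :: "'a set \<Rightarrow> ('a \<times> 'a) set \<Rightarrow> 'a \<Rightarrow> 'a \<Rightarrow> 'a set" where
  "interval V E u v = {x \<in> V. gdist E u x + gdist E x v = gdist E u v}"

definition median_graph :: "'a set \<Rightarrow> ('a \<times> 'a) set \<Rightarrow> bool" where
  "median_graph V E \<longleftrightarrow> simple_connected_graph V E \<and>
     (\<forall>x\<in>V. \<forall>y\<in>V. \<forall>z\<in>V. card (interval V E x y \<inter> interval V E y z \<inter> interval V E z x) = 1)"

definition gated :: "'a set \<Rightarrow> ('a \<times> 'a) set \<Rightarrow> 'a set \<Rightarrow> bool" where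
  "gated V E H \<longleftrightarrow> (\<forall>v\<in>V. \<exists>g\<in>H. \<forall>x\<in>H. g \<in> interval V E v x)"

definition edges :: "('a \<times> 'a) set \<Rightarrow> 'a set set" where
  "edges E = {{u, v} | u v. (u, v) \<in> E}"

definition opposite :: "('a \<times> 'a) set \<Rightarrow> 'a set \<Rightarrow> 'a set \<Rightarrow> bool" where
  "opposite E e f \<longleftrightarrow> (\<exists>a b c d. e = {a, b} \<and> f = {c, d} \<and> distinct [a, b, c, d] \<and>
      (a, b) \<in> E \<and> (b, c) \<in> E \<and> (c, d) \<in> E \<and> (d, a) \<in> E)"

definition theta_classes :: "('a \<times> 'a) set \<Rightarrow> 'a set set set" where
  "theta_classes E = edges E // ({(e, f). opposite E e f}\<^sup>*)"

definition comp_del :: "('a \<times> 'a) set \<Rightarrow> 'a set set \<Rightarrow> 'a \<Rightarrow> 'a set" where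
  "comp_del E C v = {w. (v, w) \<in> {(x, y). (x, y) \<in> E \<and> {x, y} \<notin> C}\<^sup>*}"

definition halfspaces :: "'a set \<Rightarrow> ('a \<times> 'a) set \<Rightarrow> 'a set set \<Rightarrow> 'a set set" where
  "halfspaces V E C = comp_del E C ` V"

definition minority :: "'a set \<Rightarrow> ('a \<times> 'a) set \<Rightarrow> 'a set set \<Rightarrow> 'a set" where
  "minority V E C = (THE H. H \<in> halfspaces V E C \<and>
      (\<forall>K \<in> halfspaces V E C. K \<noteq> H \<longrightarrow> card H < card K))"

definition majority :: "'a set \<Rightarrow> ('a \<times> 'a) set \<Rightarrow> 'a set set \<Rightarrow> 'a set" where
  "majority V E C = V - minority V E C"

definition ladder :: "'a set \<Rightarrow> ('a \<times> 'a) set \<Rightarrow> 'a \<Rightarrow> 'a \<Rightarrow> 'a set set set" where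
  "ladder V E u v = {C \<in> theta_classes E. comp_del E C u \<noteq> comp_del E C v \<and>
      (\<exists>w. (u, w) \<in> E \<and> {u, w} \<in> C)}"

text \<open>Vertex sets of the large sets G_i for the enumeration Es = [E_1, ..., E_l]:
V(G_0) = V, V(G_{i+1}) = V(G_i) - H'_{i+1}.\<close>
fun large_set :: "'a set \<Rightarrow> ('a \<times> 'a) set \<Rightarrow> 'a set set list \<Rightarrow> nat \<Rightarrow> 'a set" where
  "large_set V E Es 0 = V"
| "large_set V E Es (Suc i) = large_set V E Es i - minority V E (Es ! i)"

definition slice :: "'a set \<Rightarrow> ('a \<times> 'a) set \<Rightarrow> 'a set set list \<Rightarrow> nat \<Rightarrow> 'a set" where
  "slice V E Es i = large_set V E Es i - large_set V E Es (Suc i)"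

end

theory Submission
  imports Defs
begin

text \<open>In a median graph every \<Theta>-class is the set of edges between W a b and W b a for any of
  its edges ab, where W a b consists of the vertices closer to a than to b, and both sets are
  convex. Hence the slice S_i, the minority halfspace of E_(i+1) intersected with the majority
  halfspaces of E_1, ..., E_i, is convex. It contains the neighbour of v_0 across E_(i+1), since
  that edge lies in no other class. A nonempty convex set is gated: a vertex of the set nearest to
  v is the median of v, itself and any other vertex of the set.\<close>

section \<open>Walks and distances\<close>

lemma walk_Cons_Cons_iff [simp]: "walk E (x # y # xs) \<longleftrightarrow> (x, y) \<in> E \<and> walk E (y # xs)"
proof -
  have "(\<forall>i < Suc (length xs). ((x # y # xs) ! i, (x # y # xs) ! Suc i) \<in> E) \<longleftrightarrow>
        (x, y) \<in> E \<and> (\<forall>i < length xs. ((y # xs) ! i, (y # xs) ! Suc i) \<in> E)"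
    by (auto simp: less_Suc_eq_0_disj)
  then show ?thesis by (simp add: walk_def)
qed

lemma not_walk_Nil [simp]: "\<not> walk E []"
  by (simp add: walk_def)

lemma walk_singleton [simp]: "walk E [x]"
  by (simp add: walk_def)

lemma walk_append_tl: "walk E p \<Longrightarrow> walk E q \<Longrightarrow> last p = hd q \<Longrightarrow> walk E (p @ tl q)"
proof (induction p rule: induct_list012)
  case (2 x)
  then show ?case by (cases q) auto
next
  case (3 x y ys)
  then show ?case by simp
qed simp

lemma walk_rev: "sym E \<Longrightarrow> walk E p \<Longrightarrow> walk E (rev p)"
proof (induction p rule: induct_list012)
  case (3 x y ys)
  then have "walk E (rev (y # ys) @ tl [y, x])"
    by (intro walk_append_tl) (auto dest: symD)
  then show ?case by simp
qed simp_all

locale connected_graph =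
  fixes V :: "'a set" and E :: "('a \<times> 'a) set"
  assumes simple_connected_graph: "simple_connected_graph V E"
begin

abbreviation d :: "'a \<Rightarrow> 'a \<Rightarrow> nat" where "d \<equiv> gdist E"

lemma finite_V: "finite V"
  and sym_E: "sym E"
  and irrefl_E: "(v, v) \<notin> E"
  and edge_in_V: "(u, v) \<in> E \<Longrightarrow> u \<in> V \<and> v \<in> V"
  and connected: "u \<in> V \<Longrightarrow> v \<in> V \<Longrightarrow> \<exists>p. walk E p \<and> hd p = u \<and> last p = v"
  using simple_connected_graph unfolding simple_connected_graph_def by auto

lemma edge_sym: "(u, v) \<in> E \<Longrightarrow> (v, u) \<in> E"
  using sym_E by (rule symD)

lemma gdist_le_walk_length:
  assumes "walk E p" "hd p = u" "last p = v"
  shows "d u v \<le> length p - 1"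
proof -
  have "length p = Suc (length p - 1)" using assms by (cases p) auto
  with assms show ?thesis unfolding gdist_def by (intro Least_le) blast
qed

lemma geodesic_walk:
  assumes "u \<in> V" "v \<in> V"
  obtains p where "walk E p" "hd p = u" "last p = v" "length p = Suc (d u v)"
proof -
  obtain p where p: "walk E p" "hd p = u" "last p = v" using connected assms by blast
  then have "length p = Suc (length p - 1)" by (cases p) auto
  with p have "\<exists>n p. walk E p \<and> hd p = u \<and> last p = v \<and> length p = Suc n" by blast
  then have "\<exists>p. walk E p \<and> hd p = u \<and> last p = v \<and> length p = Suc (d u v)"
    unfolding gdist_def by (rule LeastI_ex)
  with that show ?thesis by blast
qed

lemma gdist_self [simp]: "d u u = 0"
  using gdist_le_walk_length[of "[u]" u u] by simp

lemma gdist_eq_0_imp_eq: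
  assumes "u \<in> V" "v \<in> V" "d u v = 0"
  shows "u = v"
proof -
  obtain p where "walk E p" "hd p = u" "last p = v" "length p = Suc 0"
    using geodesic_walk[OF assms(1,2)] assms(3) by auto
  then show ?thesis by (cases p) auto
qed

lemma gdist_commute:
  assumes "u \<in> V" "v \<in> V"
  shows "d u v = d v u"
proof -
  have "d x y \<le> d y x" if xy: "x \<in> V" "y \<in> V" for x y
  proof -
    obtain p where p: "walk E p" "hd p = y" "last p = x" "length p = Suc (d y x)"
      using geodesic_walk[OF xy(2,1)] .
    then have "p \<noteq> []" by auto
    with p have "d x y \<le> length (rev p) - 1"
      by (intro gdist_le_walk_length walk_rev[OF sym_E]) (auto simp: hd_rev last_rev)
    with p show ?thesis by simp
  qed
  with assms show ?thesis by (simp add: le_antisym)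
qed

lemma gdist_triangle:
  assumes "u \<in> V" "v \<in> V" "w \<in> V"
  shows "d u w \<le> d u v + d v w"
proof -
  obtain p where p: "walk E p" "hd p = u" "last p = v" "length p = Suc (d u v)"
    using geodesic_walk[OF assms(1,2)] .
  obtain q where q: "walk E q" "hd q = v" "last q = w" "length q = Suc (d v w)"
    using geodesic_walk[OF assms(2,3)] .
  have "last (p @ tl q) = w"
    using p q by (cases q) (auto simp: last_append)
  moreover have "hd (p @ tl q) = u" using p by (cases p) auto
  moreover have "walk E (p @ tl q)" using walk_append_tl[OF p(1) q(1)] p(3) q(2) by simp
  ultimately have "d u w \<le> length (p @ tl q) - 1"
    using gdist_le_walk_length by blast
  with p(4) q(4) show ?thesis by simp
qed

lemma gdist_edge: assumes "(u, v) \<in> E" shows "d u v = 1"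
proof -
  have "d u v \<le> 1" using gdist_le_walk_length[of "[u, v]" u v] assms by simp
  moreover have "d u v \<noteq> 0"
    using gdist_eq_0_imp_eq edge_in_V[OF assms] assms irrefl_E by blast
  ultimately show ?thesis by simp
qed

lemma gdist_edge_le:
  assumes "(u, w) \<in> E" "x \<in> V"
  shows "d u x \<le> d w x + 1"
  using gdist_triangle[of u w x] edge_in_V[OF assms(1)] assms gdist_edge[OF assms(1)] by auto

lemma geodesic_first_step:
  assumes "u \<in> V" "v \<in> V" "0 < d u v"
  obtains w where "(u, w) \<in> E" "d w v + 1 = d u v"
proof -
  obtain p where p: "walk E p" "hd p = u" "last p = v" "length p = Suc (d u v)"
    using geodesic_walk[OF assms(1,2)] .
  with assms(3) obtain w rest where p_eq: "p = u # w # rest"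
    by (cases p rule: remdups_adj.cases) auto
  with p have uw: "(u, w) \<in> E" "walk E (w # rest)" "last (w # rest) = v" by auto
  then have "d w v \<le> length (w # rest) - 1" using gdist_le_walk_length[OF uw(2)] by simp
  then have "d w v + 1 \<le> d u v" using p(4) p_eq by simp
  moreover have "d u v \<le> d w v + 1"
    using gdist_edge_le uw(1) assms(2) .
  ultimately have "d w v + 1 = d u v" by simp
  with uw(1) show ?thesis by (rule that)
qed

lemma gdist_eq_1_imp_edge:
  assumes "u \<in> V" "v \<in> V" "d u v = 1"
  shows "(u, v) \<in> E"
proof -
  obtain w where w: "(u, w) \<in> E" "d w v + 1 = d u v"
    using geodesic_first_step[OF assms(1,2)] assms(3) by (metis zero_less_one)
  then have "w = v"
    using gdist_eq_0_imp_eq edge_in_V assms by auto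
  with w show ?thesis by simp
qed

definition convex :: "'a set \<Rightarrow> bool" where
  "convex S \<longleftrightarrow> S \<subseteq> V \<and> (\<forall>x\<in>S. \<forall>y\<in>S. \<forall>z\<in>V. d x z + d z y = d x y \<longrightarrow> z \<in> S)"

lemma convexD: "convex S \<Longrightarrow> x \<in> S \<Longrightarrow> y \<in> S \<Longrightarrow> z \<in> V \<Longrightarrow> d x z + d z y = d x y \<Longrightarrow> z \<in> S"
  unfolding convex_def by blast

lemma convex_subset: "convex S \<Longrightarrow> S \<subseteq> V"
  unfolding convex_def by blast

lemma convex_V: "convex V"
  unfolding convex_def by blast

lemma convex_Int: "convex S \<Longrightarrow> convex T \<Longrightarrow> convex (S \<inter> T)"
  unfolding convex_def by blast

lemma convex_connected:
  assumes S: "convex S" and "v \<in> S" "w \<in> S"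
  shows "(v, w) \<in> {(x, y). (x, y) \<in> E \<and> x \<in> S \<and> y \<in> S}\<^sup>*"
  using assms(2,3)
proof (induction "d v w" arbitrary: v)
  case 0
  then have "v = w" using gdist_eq_0_imp_eq convex_subset[OF S] by (metis subsetD)
  then show ?case by simp
next
  case (Suc k)
  have vw: "v \<in> V" "w \<in> V" "0 < d v w" using convex_subset[OF S] Suc.prems Suc.hyps(2) by auto
  then obtain u where u: "(v, u) \<in> E" "d u w + 1 = d v w"
    by (rule geodesic_first_step)
  have "u \<in> S"
    using convexD[OF S Suc.prems] edge_in_V[OF u(1)] gdist_edge[OF u(1)] u(2) by simp
  moreover have "(u, w) \<in> {(x, y). (x, y) \<in> E \<and> x \<in> S \<and> y \<in> S}\<^sup>*"
    using Suc.hyps(1)[of u] Suc.hyps(2) Suc.prems(2) u(2) \<open>u \<in> S\<close> by simp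
  ultimately show ?case using u(1) Suc.prems(1) by (auto intro: converse_rtrancl_into_rtrancl)
qed

end

section \<open>Medians and the sets W a b\<close>

locale median =
  fixes V :: "'a set" and E :: "('a \<times> 'a) set"
  assumes median_graph: "median_graph V E"

sublocale median \<subseteq> connected_graph
  using median_graph by unfold_locales (simp add: median_graph_def)

context median
begin

definition is_median :: "'a \<Rightarrow> 'a \<Rightarrow> 'a \<Rightarrow> 'a \<Rightarrow> bool" where
  "is_median x y z m \<longleftrightarrow> m \<in> V \<and> d x m + d m y = d x y \<and> d y m + d m z = d y z \<and> d z m + d m x = d z x"

lemma is_median_iff_interval:
  "interval V E x y \<inter> interval V E y z \<inter> interval V E z x = {m. is_median x y z m}"
  unfolding is_median_def interval_def by auto

lemma ex1_median:
  assumes "x \<in> V" "y \<in> V" "z \<in> V"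
  shows "\<exists>!m. is_median x y z m"
proof -
  have "card {m. is_median x y z m} = 1"
    using median_graph assms unfolding median_graph_def is_median_iff_interval by blast
  then show ?thesis
    by (metis card_1_singletonE mem_Collect_eq singletonD singletonI)
qed

lemma median_exists:
  assumes "x \<in> V" "y \<in> V" "z \<in> V"
  obtains m where "is_median x y z m"
  using ex1_median[OF assms] by blast

lemma median_unique:
  assumes "x \<in> V" "y \<in> V" "z \<in> V" "is_median x y z m" "is_median x y z m'"
  shows "m = m'"
  using ex1_median[OF assms(1-3)] assms(4,5) by blast

lemma edge_gdist_cases:
  assumes ab: "(a, b) \<in> E" and x: "x \<in> V"
  shows "d x b = d x a + 1 \<or> d x a = d x b + 1"
proof -
  have aV: "a \<in> V" and bV: "b \<in> V" using edge_in_V[OF ab] by auto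
  obtain m where m: "is_median x a b m" using median_exists[OF x aV bV] .
  then have mV: "m \<in> V" and m_ab: "d a m + d m b = 1" using gdist_edge[OF ab]
    unfolding is_median_def by auto
  show ?thesis
  proof (cases "d a m = 0")
    case True
    then have "m = a" using gdist_eq_0_imp_eq[OF aV mV] by simp
    then have "d b a + d a x = d b x" using m unfolding is_median_def by simp
    then show ?thesis using gdist_commute x aV bV gdist_edge[OF ab] by simp
  next
    case False
    then have "m = b" using m_ab gdist_eq_0_imp_eq[OF mV bV] by simp
    then have "d x b + d b a = d x a" using m unfolding is_median_def by simp
    then show ?thesis using gdist_commute aV bV gdist_edge[OF ab] by simp
  qed
qed

text \<open>For an edge ab, W a b and W b a turn out to be the two halfspaces of the \<Theta>-class of ab.\<close>

definition W :: "'a \<Rightarrow> 'a \<Rightarrow> 'a set" where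
  "W a b = {x \<in> V. d x a < d x b}"

lemma W_subset: "W a b \<subseteq> V"
  unfolding W_def by blast

lemma gdist_in_W:
  assumes "(a, b) \<in> E" "x \<in> W a b"
  shows "d x b = d x a + 1"
  using edge_gdist_cases[OF assms(1), of x] assms(2) unfolding W_def by auto

lemma not_in_W_iff:
  assumes "(a, b) \<in> E" "x \<in> V"
  shows "x \<notin> W a b \<longleftrightarrow> x \<in> W b a"
  using edge_gdist_cases[OF assms] assms unfolding W_def by auto

lemma W_disjoint: "W a b \<inter> W b a = {}"
  unfolding W_def by auto

lemma W_Un: "(a, b) \<in> E \<Longrightarrow> W a b \<union> W b a = V"
  using not_in_W_iff W_subset by blast

lemma in_W_self:
  assumes "(a, b) \<in> E"
  shows "a \<in> W a b"
  using edge_in_V[OF assms] gdist_edge[OF assms] unfolding W_def by simp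

lemma geodesic_to_in_W:
  assumes ab: "(a, b) \<in> E" and x: "x \<in> W a b" and z: "z \<in> V" "d a z + d z x = d a x"
  shows "z \<in> W a b"
proof -
  have xV: "x \<in> V" and aV: "a \<in> V" and bV: "b \<in> V"
    using x W_subset edge_in_V[OF ab] by auto
  have "d x b \<le> d x z + d z b" using gdist_triangle xV z(1) bV .
  then have "d a z + 1 \<le> d z b"
    using gdist_in_W[OF ab x] z(2) gdist_commute[OF xV aV] gdist_commute[OF xV z(1)] by simp
  then show ?thesis using z(1) gdist_commute[OF aV z(1)] unfolding W_def by simp
qed

lemma exit_neighbour:
  assumes ab: "(a, b) \<in> E" and xW: "x \<in> W a b" and yW: "y \<in> W a b"
    and c: "c \<in> V" "c \<notin> W a b" "d x c + d c y = d x y"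
    and shorter: "\<And>u z. u \<in> W a b \<Longrightarrow> z \<in> V \<Longrightarrow> d u z + d z y = d u y \<Longrightarrow> d u y < d x y \<Longrightarrow> z \<in> W a b"
  obtains x' where "(x, x') \<in> E" "x' \<notin> W a b" "d x x' + d x' c = d x c"
proof -
  have xV: "x \<in> V" and yV: "y \<in> V" using xW yW W_subset by auto
  let ?S = "{z \<in> V. d x z + d z c = d x c \<and> z \<notin> W a b}"
  obtain z where z: "z \<in> ?S" and z_min: "\<And>z'. z' \<in> ?S \<Longrightarrow> d x z \<le> d x z'"
    using ex_has_least_nat[of "\<lambda>z. z \<in> ?S" c "d x"] c by auto
  have zV: "z \<in> V" and zc: "d x z + d z c = d x c" and zW: "z \<notin> W a b" using z by auto
  have "d x z = 1"
  proof (rule ccontr)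
    assume "d x z \<noteq> 1"
    moreover have "d x z \<noteq> 0" using gdist_eq_0_imp_eq[OF xV zV] xW zW by auto
    ultimately have two: "2 \<le> d x z" by simp
    then obtain u where u: "(z, u) \<in> E" "d u x + 1 = d z x"
      using geodesic_first_step[OF zV xV] gdist_commute[OF xV zV] by auto
    have uV: "u \<in> V" using edge_in_V[OF u(1)] by simp
    have xu: "d x u + 1 = d x z" and uz: "d u z = 1"
      using u gdist_commute xV zV uV gdist_edge[OF edge_sym[OF u(1)]] by auto
    have "d x c \<le> d x u + d u c" "d u c \<le> d u z + d z c"
      using gdist_triangle xV uV zV c(1) by blast+
    then have "d x u + d u c = d x c" using xu uz zc by simp
    with uV z_min xu have uW: "u \<in> W a b" by fastforce
    have "d x y \<le> d x u + d u y" "d u y \<le> d u z + d z y" "d z y \<le> d z c + d c y"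
      using gdist_triangle xV uV zV yV c(1) by blast+
    then have "d u z + d z y = d u y" "d u y < d x y"
      using xu uz zc c(3) two by linarith+
    then have "z \<in> W a b" using shorter[OF uW zV] by blast
    with zW show False by simp
  qed
  then have "(x, z) \<in> E" using gdist_eq_1_imp_edge[OF xV zV] by simp
  from this zW zc show ?thesis by (rule that)
qed

lemma median_between_exit_neighbours:
  assumes ab: "(a, b) \<in> E" and xW: "x \<in> W a b" and yW: "y \<in> W a b"
    and x': "(x, x') \<in> E" "x' \<notin> W a b" and y': "(y, y') \<in> E" "y' \<notin> W a b"
    and x'y': "d x' y' + 2 = d x y" and n: "is_median x y a n"
  shows "d x' n + d n y' = d x' y'"
proof -
  have xV: "x \<in> V" and yV: "y \<in> V" and aV: "a \<in> V" and bV: "b \<in> V"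
    and x'V: "x' \<in> V" and y'V: "y' \<in> V"
    using xW yW W_subset edge_in_V ab x'(1) y'(1) by blast+
  have nV: "n \<in> V" and n1: "d x n + d n y = d x y" and n2: "d y n + d n a = d y a"
    and n3: "d a n + d n x = d a x" using n unfolding is_median_def by auto
  have "n \<in> W a b" using geodesic_to_in_W[OF ab xW nV] n3 gdist_commute xV nV by simp
  then have "d n b = d n a + 1" by (rule gdist_in_W[OF ab])
  then have n_med_b: "is_median x y b n"
    using n gdist_in_W[OF ab xW] gdist_in_W[OF ab yW] gdist_commute xV bV nV aV
    unfolding is_median_def by auto
  have "x' \<in> W b a" "y' \<in> W b a" using not_in_W_iff[OF ab] x' y' x'V y'V by auto
  then have "d x' a = d x' b + 1" "d y' a = d y' b + 1"
    using gdist_in_W[OF edge_sym[OF ab]] by blast+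
  moreover have "d x' a \<le> d x a + 1" "d x b \<le> d x' b + 1" "d y' a \<le> d y a + 1" "d y b \<le> d y' b + 1"
    using gdist_edge_le x'(1) y'(1) edge_sym aV bV by blast+
  ultimately have x'b: "d x' b = d x a" and y'b: "d y' b = d y a"
    using gdist_in_W[OF ab xW] gdist_in_W[OF ab yW] by linarith+
  obtain m where m: "is_median x' y' b m" using median_exists[OF x'V y'V bV] .
  then have mV: "m \<in> V" and m1: "d x' m + d m y' = d x' y'" and m2: "d y' m + d m b = d y' b"
    and m3: "d b m + d m x' = d b x'" unfolding is_median_def by auto
  have "d x m \<le> d x x' + d x' m" "d m y \<le> d m y' + d y' y" "d x y \<le> d x m + d m y"
    "d y m \<le> d y y' + d y' m" "d y b \<le> d y m + d m b" "d m x \<le> d m x' + d x' x"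
    "d b x \<le> d b m + d m x"
    using gdist_triangle xV x'V mV yV y'V bV by blast+
  moreover have "d x x' = 1" "d x' x = 1" "d y y' = 1" "d y' y = 1"
    using gdist_edge x'(1) y'(1) edge_sym by blast+
  moreover have "d b x' = d x' b" "d b x = d x b" "d m y = d y m" "d b m = d m b"
    using gdist_commute x'V xV mV yV bV by auto
  ultimately have "is_median x y b m"
    using mV m1 m2 m3 x'y' x'b y'b gdist_in_W[OF ab xW] gdist_in_W[OF ab yW]
    unfolding is_median_def by linarith
  with n_med_b have "n = m" using median_unique xV yV bV by blast
  with m1 show ?thesis by simp
qed

text \<open>Induction on d x y: if a geodesic from x to y left W a b, the exit neighbours x', y' of x
  and y would lie in W b a, and the median of x, y, a would lie both in W a b and, by induction
  applied to W b a, in W b a.\<close>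

lemma W_geodesically_closed:
  assumes "(a, b) \<in> E" "x \<in> W a b" "y \<in> W a b" "z \<in> V" "d x z + d z y = d x y"
  shows "z \<in> W a b"
  using assms
proof (induction "d x y" arbitrary: a b x y z rule: less_induct)
  case less
  note ab = less.prems(1) and xW = less.prems(2) and yW = less.prems(3)
  have xV: "x \<in> V" and yV: "y \<in> V" using xW yW W_subset by auto
  show "z \<in> W a b"
  proof (rule ccontr)
    assume zW: "z \<notin> W a b"
    obtain x' where x': "(x, x') \<in> E" "x' \<notin> W a b" "d x x' + d x' z = d x z"
    proof (rule exit_neighbour[OF ab xW yW less.prems(4) zW less.prems(5)])
      fix u w assume "u \<in> W a b" "w \<in> V" "d u w + d w y = d u y" "d u y < d x y"
      then show "w \<in> W a b" using less.hyps[of u y a b w] ab yW by simp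
    qed
    have x'V: "x' \<in> V" using edge_in_V[OF x'(1)] by simp
    have "d x y \<le> d x x' + d x' y" "d x' y \<le> d x' z + d z y"
      using gdist_triangle xV x'V yV less.prems(4) by blast+
    then have x'_geo: "d y x' + d x' x = d y x"
      using x'(3) less.prems(5) gdist_commute xV yV x'V by simp
    obtain y' where y': "(y, y') \<in> E" "y' \<notin> W a b" "d y y' + d y' x' = d y x'"
    proof (rule exit_neighbour[OF ab yW xW x'V x'(2) x'_geo])
      fix u w assume "u \<in> W a b" "w \<in> V" "d u w + d w x = d u x" "d u x < d y x"
      then show "w \<in> W a b"
        using less.hyps[of u x a b w] ab xW gdist_commute[OF xV yV] by simp
    qed
    have y'V: "y' \<in> V" using edge_in_V[OF y'(1)] by simp
    have x'y': "d x' y' + 2 = d x y"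
      using x'_geo y'(3) gdist_edge[OF x'(1)] gdist_edge[OF y'(1)] gdist_commute xV yV x'V y'V
      by simp
    obtain n where n: "is_median x y a n"
      using median_exists[OF xV yV] edge_in_V[OF ab] by blast
    then have nV: "n \<in> V" and "d a n + d n x = d a x" unfolding is_median_def by auto
    then have "n \<in> W a b"
      using geodesic_to_in_W[OF ab xW] gdist_commute xV by simp
    moreover have "n \<in> W b a"
    proof (rule less.hyps[OF _ edge_sym[OF ab]])
      show "x' \<in> W b a" "y' \<in> W b a" using not_in_W_iff[OF ab] x' y' x'V y'V by auto
      show "d x' n + d n y' = d x' y'"
        using median_between_exit_neighbours[OF ab xW yW x'(1,2) y'(1,2) x'y' n] .
    qed (use nV x'y' in simp_all)
    ultimately show False using W_disjoint by blast
  qed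
qed

lemma convex_W: "(a, b) \<in> E \<Longrightarrow> convex (W a b)"
  unfolding convex_def using W_geodesically_closed W_subset by blast

lemma gated_if_convex:
  assumes H: "convex H" "H \<noteq> {}"
  shows "gated V E H"
  unfolding gated_def
proof
  fix v assume vV: "v \<in> V"
  have HV: "H \<subseteq> V" using convex_subset[OF H(1)] .
  obtain g where g: "g \<in> H" and g_min: "\<And>h. h \<in> H \<Longrightarrow> d v g \<le> d v h"
    using ex_has_least_nat[of "\<lambda>h. h \<in> H" _ "d v"] H(2) by blast
  show "\<exists>g\<in>H. \<forall>x\<in>H. g \<in> interval V E v x"
  proof (intro bexI[OF _ g] ballI)
    fix x assume x: "x \<in> H"
    have gV: "g \<in> V" and xV: "x \<in> V" using HV g x by auto
    obtain m where m: "is_median v g x m" using median_exists[OF vV gV xV] .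
    then have mV: "m \<in> V" and m1: "d v m + d m g = d v g" and m2: "d g m + d m x = d g x"
      and m3: "d x m + d m v = d x v" unfolding is_median_def by auto
    have "m \<in> H" using convexD[OF H(1) g x mV m2] .
    then have "d m g = 0" using g_min m1 by fastforce
    then have "m = g" using gdist_eq_0_imp_eq[OF mV gV] by simp
    then show "g \<in> interval V E v x"
      using m3 gdist_commute vV gV xV unfolding interval_def by auto
  qed
qed

end

section \<open>\<Theta>-classes and their halfspaces\<close>

definition theta :: "('a \<times> 'a) set \<Rightarrow> 'a set rel" where
  "theta E = {(e, f). opposite E e f}\<^sup>*"

lemma theta_classes_eq: "theta_classes E = edges E // theta E"
  unfolding theta_classes_def theta_def ..

lemma opposite_sym:
  assumes "opposite E e f"
  shows "opposite E f e"
proof -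
  obtain a b c d where abcd: "e = {a, b}" "f = {c, d}" "distinct [a, b, c, d]"
    "(a, b) \<in> E" "(b, c) \<in> E" "(c, d) \<in> E" "(d, a) \<in> E"
    using assms unfolding opposite_def by blast
  have "distinct [c, d, a, b]" using abcd(3) by auto
  with abcd show ?thesis
    unfolding opposite_def by blast
qed

lemma sym_theta: "sym (theta E)"
  unfolding theta_def by (intro sym_rtrancl) (auto intro: symI opposite_sym)

lemma theta_classes_disjoint:
  assumes "C \<in> theta_classes E" "D \<in> theta_classes E" "e \<in> C" "e \<in> D"
  shows "C = D"
proof -
  obtain x y where "C = theta E `` {x}" "D = theta E `` {y}"
    using assms(1,2) unfolding theta_classes_eq by (auto elim!: quotientE)
  moreover have "trans (theta E)" unfolding theta_def by (rule trans_rtrancl)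
  ultimately show ?thesis
    using assms(3,4) sym_theta by (auto dest: symD elim: transE)
qed

lemma minority_eqI:
  assumes "halfspaces V E C = {A, B}" "card A < card B"
  shows "minority V E C = A"
  unfolding minority_def assms(1) using assms(2) by (intro the_equality) auto

context median
begin

definition cut :: "'a \<Rightarrow> 'a \<Rightarrow> 'a set set" where
  "cut a b = {{u, v} | u v. (u, v) \<in> E \<and> u \<in> W a b \<and> v \<notin> W a b}"

lemma cut_commute:
  assumes ab: "(a, b) \<in> E"
  shows "cut b a = cut a b"
proof -
  have "cut b a \<subseteq> cut a b" if edge: "(a, b) \<in> E" for a b
  proof
    fix f assume "f \<in> cut b a"
    then obtain u v where uv: "f = {u, v}" "(u, v) \<in> E" "u \<in> W b a" "v \<notin> W b a"
      unfolding cut_def by blast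
    then have "v \<in> W a b" "u \<notin> W a b"
      using not_in_W_iff[OF edge] edge_in_V W_disjoint by blast+
    then show "f \<in> cut a b"
      unfolding cut_def using uv(1) edge_sym[OF uv(2)] by (auto simp: insert_commute)
  qed
  then show ?thesis using ab edge_sym[OF ab] by blast
qed

lemma edge_in_cut:
  assumes "(a, b) \<in> E"
  shows "{a, b} \<in> cut a b"
  using assms in_W_self[OF assms] in_W_self[OF edge_sym[OF assms]] W_disjoint
  unfolding cut_def by blast

lemma edge_not_in_cut:
  assumes "x \<in> W a b \<longleftrightarrow> y \<in> W a b"
  shows "{x, y} \<notin> cut a b"
  using assms unfolding cut_def by (auto simp: doubleton_eq_iff)

lemma common_neighbour_in_W:
  assumes ab: "(a, b) \<in> E" and W: "x \<in> W a b" "y \<in> W a b" "x \<noteq> y"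
    and p: "(p, x) \<in> E" "(p, y) \<in> E"
  shows "p \<in> W a b"
proof -
  have xV: "x \<in> V" and yV: "y \<in> V" and pV: "p \<in> V" using W W_subset edge_in_V[OF p(1)] by auto
  have "d x y \<le> d x p + d p y" using gdist_triangle xV pV yV .
  moreover have "d x p = 1" "d p y = 1" using gdist_edge p edge_sym by blast+
  moreover have "d x y \<noteq> 0" using gdist_eq_0_imp_eq[OF xV yV] W(3) by auto
  moreover have "d x y \<noteq> 1"
  proof
    assume "d x y = 1"
    then have "(x, y) \<in> E" using gdist_eq_1_imp_edge[OF xV yV] by simp
    with edge_gdist_cases[OF this pV] p show False using gdist_edge by simp
  qed
  ultimately have "d x p + d p y = d x y" by simp
  then show ?thesis using W_geodesically_closed[OF ab W(1,2) pV] by simp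
qed

text \<open>A vertex with two distinct neighbours in W a b lies in W a b; hence opposite edges of a
  square cross W a b in the same direction.\<close>

lemma cut_opposite:
  assumes ab: "(a, b) \<in> E" and e: "e \<in> cut a b" and opp: "opposite E e f"
  shows "f \<in> cut a b"
proof -
  obtain u v where uv: "e = {u, v}" "(u, v) \<in> E" "u \<in> W a b" "v \<notin> W a b"
    using e unfolding cut_def by blast
  obtain p q c r where sq: "e = {p, q}" "f = {c, r}" "distinct [p, q, c, r]"
    "(p, q) \<in> E" "(q, c) \<in> E" "(c, r) \<in> E" "(r, p) \<in> E"
    using opp unfolding opposite_def by blast
  have V4: "p \<in> V" "q \<in> V" "c \<in> V" "r \<in> V" using edge_in_V sq by blast+
  have pq: "p \<in> W a b \<longleftrightarrow> q \<notin> W a b" using uv sq(1) by (auto simp: doubleton_eq_iff)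
  have W_or: "z \<in> W a b \<or> z \<in> W b a" if "z \<in> V" for z using not_in_W_iff[OF ab that] by blast
  have "r \<in> W a b \<longleftrightarrow> p \<in> W a b" "c \<in> W a b \<longleftrightarrow> q \<in> W a b"
    using pq sq V4 W_or W_disjoint
      common_neighbour_in_W[OF ab, of r q p] common_neighbour_in_W[OF ab, of p c q]
      common_neighbour_in_W[OF edge_sym[OF ab], of r q p]
      common_neighbour_in_W[OF edge_sym[OF ab], of p c q]
    by (auto dest: edge_sym)
  with pq show ?thesis
    unfolding cut_def using sq(2,6) edge_sym[OF sq(6)] by (cases "c \<in> W a b") (auto simp: insert_commute)
qed

lemma theta_subset_cut:
  assumes ab: "(a, b) \<in> E" and "({a, b}, f) \<in> theta E"
  shows "f \<in> cut a b"
  using assms(2) unfolding theta_def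
proof (induction rule: rtrancl_induct)
  case base
  show ?case using edge_in_cut[OF ab] .
next
  case (step e f)
  then show ?case using cut_opposite[OF ab] by simp
qed

text \<open>Every edge uv leaving W a b is reached from ab by a ladder of squares: the neighbour u' of
  u towards a and the median of u', v, b span an edge of the cut one step closer to ab.\<close>

lemma cut_subset_theta:
  assumes ab: "(a, b) \<in> E" and uv: "(u, v) \<in> E" "u \<in> W a b" "v \<notin> W a b"
  shows "({a, b}, {u, v}) \<in> theta E"
  using uv
proof (induction "d u a" arbitrary: u v)
  case 0
  have aV: "a \<in> V" and bV: "b \<in> V" and uV: "u \<in> V" and vV: "v \<in> V"
    using edge_in_V ab "0.prems"(1) by blast+
  have "u = a" using gdist_eq_0_imp_eq[OF uV aV] "0.hyps" by simp
  have "v = b"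
  proof (rule ccontr)
    assume "v \<noteq> b"
    have "v \<in> W b a" using not_in_W_iff[OF ab vV] "0.prems"(3) by simp
    then have "a \<in> W b a"
      using common_neighbour_in_W[OF edge_sym[OF ab] _ in_W_self[OF edge_sym[OF ab]] \<open>v \<noteq> b\<close>]
        "0.prems"(1) \<open>u = a\<close> ab by simp
    then show False using in_W_self[OF ab] W_disjoint by blast
  qed
  with \<open>u = a\<close> show ?case unfolding theta_def by simp
next
  case (Suc k)
  have aV: "a \<in> V" and bV: "b \<in> V" and uV: "u \<in> V" and vV: "v \<in> V"
    using edge_in_V ab Suc.prems(1) by blast+
  obtain u' where u': "(u, u') \<in> E" "d u' a + 1 = d u a"
    using geodesic_first_step[OF uV aV] Suc.hyps(2) by (metis zero_less_Suc)
  have u'V: "u' \<in> V" using edge_in_V[OF u'(1)] by simp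
  have u'W: "u' \<in> W a b"
    using geodesic_to_in_W[OF ab Suc.prems(2) u'V] u'(2) gdist_edge[OF edge_sym[OF u'(1)]]
      gdist_commute aV u'V uV by simp
  have vW: "v \<in> W b a" using not_in_W_iff[OF ab vV] Suc.prems(3) by simp
  have "d u b \<le> d v b + 1" "d v a \<le> d u a + 1"
    using gdist_edge_le Suc.prems(1) edge_sym aV bV by blast+
  then have dvb: "d v b = k + 1"
    using gdist_in_W[OF ab Suc.prems(2)] gdist_in_W[OF edge_sym[OF ab] vW] Suc.hyps(2) by linarith
  have du'b: "d u' b = k + 1"
    using gdist_in_W[OF ab u'W] u'(2) Suc.hyps(2) by simp
  have "u' \<noteq> v" using u'W Suc.prems(3) by auto
  have du'v: "d u' v = 2"
  proof -
    have "d u' v \<le> d u' u + d u v" using gdist_triangle u'V uV vV .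
    moreover have "d u' u = 1" "d u v = 1" using gdist_edge edge_sym u'(1) Suc.prems(1) by blast+
    moreover have "d u' v \<noteq> 0" using gdist_eq_0_imp_eq[OF u'V vV] \<open>u' \<noteq> v\<close> by auto
    moreover have "d u' v \<noteq> 1"
    proof
      assume "d u' v = 1"
      then have "(u', v) \<in> E" using gdist_eq_1_imp_edge[OF u'V vV] by simp
      moreover have "d u u' = 1" "d u v = 1" using gdist_edge u'(1) Suc.prems(1) by blast+
      ultimately show False using edge_gdist_cases[of u' v u] uV by simp
    qed
    ultimately show ?thesis by linarith
  qed
  obtain m where m: "is_median u' v b m" using median_exists[OF u'V vV bV] .
  then have mV: "m \<in> V" and m1: "d u' m + d m v = d u' v" and m2: "d v m + d m b = d v b"
    and m3: "d b m + d m u' = d b u'" unfolding is_median_def by auto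
  have "d m v = d v m" "d b m = d m b" "d b u' = d u' b" "d m u' = d u' m"
    using gdist_commute mV vV bV u'V by auto
  then have du'm: "d u' m = 1" and dvm: "d v m = 1"
    using m1 m2 m3 du'v dvb du'b by linarith+
  have u'm: "(u', m) \<in> E" and vm: "(v, m) \<in> E"
    using gdist_eq_1_imp_edge u'V vV mV du'm dvm by auto
  have "m \<in> W b a"
    using geodesic_to_in_W[OF edge_sym[OF ab] vW mV] m2 gdist_commute[OF bV mV] gdist_commute[OF vV mV]
      gdist_commute[OF bV vV] by simp
  then have mW: "m \<notin> W a b" using W_disjoint by blast
  have IH: "({a, b}, {u', m}) \<in> theta E"
    using Suc.hyps(1)[OF _ u'm u'W mW] u'(2) Suc.hyps(2) by simp
  have "distinct [u', m, v, u]"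
    using u'W mW Suc.prems(2) irrefl_E vm u'(1) Suc.prems(1) \<open>u' \<noteq> v\<close> by auto
  then have "opposite E {u', m} {v, u}"
    unfolding opposite_def using u'm edge_sym[OF vm] edge_sym[OF Suc.prems(1)] u'(1) by blast
  then have "({u', m}, {u, v}) \<in> {(e, f). opposite E e f}" by (simp add: insert_commute)
  with IH show ?case unfolding theta_def by (rule rtrancl_into_rtrancl)
qed

lemma theta_class_eq_cut:
  assumes "C \<in> theta_classes E"
  obtains a b where "(a, b) \<in> E" "C = cut a b"
proof -
  obtain a b where ab: "(a, b) \<in> E" and C: "C = theta E `` {{a, b}}"
    using assms unfolding theta_classes_eq edges_def by (auto elim!: quotientE)
  have "C = cut a b"
  proof
    show "C \<subseteq> cut a b" using theta_subset_cut[OF ab] C by blast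
    show "cut a b \<subseteq> C"
    proof
      fix f assume "f \<in> cut a b"
      then obtain u v where "f = {u, v}" "(u, v) \<in> E" "u \<in> W a b" "v \<notin> W a b"
        unfolding cut_def by blast
      then show "f \<in> C" using cut_subset_theta[OF ab] C by blast
    qed
  qed
  with ab show ?thesis by (rule that)
qed


lemma comp_del_cut:
  assumes ab: "(a, b) \<in> E" and v: "v \<in> V"
  shows "comp_del E (cut a b) v = {w \<in> V. w \<in> W a b \<longleftrightarrow> v \<in> W a b}"
proof
  show "comp_del E (cut a b) v \<subseteq> {w \<in> V. w \<in> W a b \<longleftrightarrow> v \<in> W a b}"
  proof
    fix w assume "w \<in> comp_del E (cut a b) v"
    then have "(v, w) \<in> {(x, y). (x, y) \<in> E \<and> {x, y} \<notin> cut a b}\<^sup>*"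
      unfolding comp_del_def by simp
    then show "w \<in> {w \<in> V. w \<in> W a b \<longleftrightarrow> v \<in> W a b}"
    proof (induction rule: rtrancl_induct)
      case (step y z)
      then have yz: "(y, z) \<in> E" "{y, z} \<notin> cut a b" by auto
      then have "y \<in> W a b \<longleftrightarrow> z \<in> W a b"
        unfolding cut_def using edge_sym[OF yz(1)] by (auto simp: insert_commute)
      then show ?case using step edge_in_V[OF yz(1)] by auto
    qed (use v in simp)
  qed
next
  have inside: "{(x, y). (x, y) \<in> E \<and> x \<in> S \<and> y \<in> S} \<subseteq> {(x, y). (x, y) \<in> E \<and> {x, y} \<notin> cut a b}"
    if S: "S = W a b \<or> S = W b a" for S
  proof clarify
    fix x y assume "x \<in> S" "y \<in> S" "{x, y} \<in> cut a b"
    moreover have "x \<in> W a b \<longleftrightarrow> y \<in> W a b" using S \<open>x \<in> S\<close> \<open>y \<in> S\<close> W_disjoint by blast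
    ultimately show False using edge_not_in_cut by blast
  qed
  show "{w \<in> V. w \<in> W a b \<longleftrightarrow> v \<in> W a b} \<subseteq> comp_del E (cut a b) v"
  proof
    fix w assume w: "w \<in> {w \<in> V. w \<in> W a b \<longleftrightarrow> v \<in> W a b}"
    obtain S where S: "S = W a b \<or> S = W b a" "convex S" "v \<in> S" "w \<in> S"
    proof (cases "v \<in> W a b")
      case True
      then show ?thesis using that[of "W a b"] w convex_W[OF ab] by simp
    next
      case False
      then have "v \<in> W b a" "w \<in> W b a" using not_in_W_iff[OF ab] w v by auto
      then show ?thesis using that[of "W b a"] convex_W[OF edge_sym[OF ab]] by simp
    qed
    show "w \<in> comp_del E (cut a b) v"
      using rtrancl_mono[OF inside[OF S(1)]] convex_connected[OF S(2-4)]
      unfolding comp_del_def by blast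
  qed
qed

lemma halfspaces_cut:
  assumes ab: "(a, b) \<in> E"
  shows "halfspaces V E (cut a b) = {W a b, W b a}"
proof -
  have "{w \<in> V. w \<in> W a b} = W a b" "{w \<in> V. w \<notin> W a b} = W b a"
    using not_in_W_iff[OF ab] W_subset by blast+
  then have "comp_del E (cut a b) v = (if v \<in> W a b then W a b else W b a)" if "v \<in> V" for v
    using comp_del_cut[OF ab that] by auto
  moreover have "a \<in> W a b" "b \<in> W b a" "b \<notin> W a b"
    using in_W_self ab edge_sym W_disjoint by blast+
  moreover have "a \<in> V" "b \<in> V" using edge_in_V[OF ab] by auto
  ultimately show ?thesis unfolding halfspaces_def by (auto simp: image_iff)
qed

text \<open>The balance hypothesis rules out ties between the two halfspaces; otherwise the
  THE in the definition of minority would denote an unspecified set.\<close>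

lemma minority_theta_class:
  assumes C: "C \<in> theta_classes E" and balanced: "2 * Min (card ` halfspaces V E C) < card V"
  obtains a b where "(a, b) \<in> E" "C = cut a b" "minority V E C = W a b"
proof -
  obtain a b where ab: "(a, b) \<in> E" and C_eq: "C = cut a b" using theta_class_eq_cut[OF C] .
  have hs: "halfspaces V E C = {W a b, W b a}" using halfspaces_cut[OF ab] C_eq by simp
  have "finite (W a b)" "finite (W b a)" using finite_V W_subset finite_subset by blast+
  then have "card (W a b) + card (W b a) = card V"
    using card_Un_disjoint W_disjoint W_Un[OF ab] by metis
  moreover have "Min (card ` halfspaces V E C) = min (card (W a b)) (card (W b a))" using hs by simp
  ultimately consider "card (W a b) < card (W b a)" | "card (W b a) < card (W a b)"
    using balanced by linarith
  then show ?thesis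
  proof cases
    case 1
    with ab C_eq show ?thesis using minority_eqI[OF hs] that by blast
  next
    case 2
    have "halfspaces V E C = {W b a, W a b}" using hs by auto
    then have "minority V E C = W b a" using 2 by (rule minority_eqI)
    with edge_sym[OF ab] C_eq cut_commute[OF ab] show ?thesis using that by metis
  qed
qed

end

section \<open>Slices\<close>

lemma large_set_eq: "large_set V E Es i = V - (\<Union>j<i. minority V E (Es ! j))"
  by (induction i) (auto simp: lessThan_Suc)

lemma slice_eq_Int: "slice V E Es i = large_set V E Es i \<inter> minority V E (Es ! i)"
  unfolding slice_def by auto

lemma twice_less_if_less_div_log:
  assumes n: "3 \<le> n" and m: "real m < real n / (2 * ln (real n))"
  shows "2 * m < n"
proof -
  have "exp 1 \<le> real n" using exp_le n by linarith
  then have "1 \<le> ln (real n)" using n by (simp add: ln_ge_iff)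
  then have "real n / (2 * ln (real n)) \<le> real n / 2"
    by (intro divide_left_mono) auto
  with m show ?thesis by linarith
qed

context median
begin

context
  fixes v0 u :: 'a and Es :: "'a set set list"
  assumes ladder: "set Es \<subseteq> ladder V E v0 u"
    and balanced: "\<forall>C\<in>set Es. 2 * Min (card ` halfspaces V E C) < card V"
begin

lemma ladder_theta_class: "i < length Es \<Longrightarrow> Es ! i \<in> theta_classes E"
  using ladder nth_mem unfolding ladder_def by blast

lemma ladder_minority:
  assumes "i < length Es"
  obtains a b where "(a, b) \<in> E" "Es ! i = cut a b" "minority V E (Es ! i) = W a b"
  using minority_theta_class ladder_theta_class balanced nth_mem assms by metis

lemma convex_large_set: "i \<le> length Es \<Longrightarrow> convex (large_set V E Es i)"
proof (induction i)
  case 0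
  show ?case using convex_V by simp
next
  case (Suc i)
  obtain a b where ab: "(a, b) \<in> E" and M: "minority V E (Es ! i) = W a b"
    using ladder_minority Suc.prems by (metis Suc_le_lessD)
  have "large_set V E Es i \<subseteq> V" using convex_subset Suc by (simp add: Suc_leD)
  then have "large_set V E Es (Suc i) = large_set V E Es i \<inter> W b a"
    using M not_in_W_iff[OF ab] by auto
  then show ?case using Suc convex_Int convex_W edge_sym[OF ab] by (simp add: Suc_leD)
qed

lemma convex_slice: "i < length Es \<Longrightarrow> convex (slice V E Es i)"
  using slice_eq_Int convex_Int convex_large_set convex_W ladder_minority
  by (metis less_imp_le_nat)

lemma slice_eq:
  assumes "i < length Es"
  shows "slice V E Es i = minority V E (Es ! i) - (\<Union>j<i. minority V E (Es ! j))"
proof -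
  have "minority V E (Es ! i) \<subseteq> V" using ladder_minority[OF assms] W_subset by metis
  then show ?thesis unfolding slice_eq_Int large_set_eq by blast
qed

text \<open>The neighbour of v0 across Es ! i lies in the slice: the edge to it belongs to no other
  class of the list, so it crosses none of the earlier minority halfspaces.\<close>

lemma slice_nonempty:
  assumes distinct: "distinct Es" and v0: "\<forall>C\<in>set Es. v0 \<notin> minority V E C"
    and i: "i < length Es"
  shows "slice V E Es i \<noteq> {}"
proof -
  obtain w where w: "(v0, w) \<in> E" "{v0, w} \<in> Es ! i"
    using ladder nth_mem[OF i] unfolding ladder_def by blast
  have new: "{v0, w} \<notin> Es ! j" if "j < i" for j
    using theta_classes_disjoint[OF ladder_theta_class[OF i] ladder_theta_class, of j] w(2)
      distinct i that nth_eq_iff_index_eq by fastforce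
  have outside: "w \<notin> minority V E (Es ! j)" if "j < i" for j
  proof
    assume "w \<in> minority V E (Es ! j)"
    moreover obtain a b where "Es ! j = cut a b" "minority V E (Es ! j) = W a b"
      using ladder_minority \<open>j < i\<close> i by (metis order.strict_trans)
    moreover have "v0 \<notin> minority V E (Es ! j)" using v0 \<open>j < i\<close> i by simp
    ultimately have "{v0, w} \<in> Es ! j" unfolding cut_def using edge_sym[OF w(1)] by blast
    with new \<open>j < i\<close> show False by blast
  qed
  obtain a b where "Es ! i = cut a b" "minority V E (Es ! i) = W a b"
    using ladder_minority[OF i] .
  moreover have "v0 \<notin> minority V E (Es ! i)" using v0 i by simp
  ultimately have "w \<in> minority V E (Es ! i)"
    using w(2) unfolding cut_def by (auto simp: doubleton_eq_iff)
  with outside show ?thesis unfolding slice_eq[OF i] by blast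
qed

end

end

theorem mainTheorem8:
  fixes V :: "'a set" and E :: "('a \<times> 'a) set" and \<omega> :: "'a \<Rightarrow> nat"
    and v0 umax :: 'a and Es :: "'a set set list"
  assumes median: "median_graph V E"
    and n3: "card V \<ge> 3"
    and small: "\<forall>C \<in> theta_classes E.
       real (Min (card ` halfspaces V E C)) < real (card V) / (2 * ln (real (card V)))"
    and v0: "v0 \<in> V" "\<forall>C \<in> theta_classes E. v0 \<in> majority V E C"
    and umax: "umax \<in> V" "\<forall>u\<in>V. gdist E v0 u + \<omega> u \<le> gdist E v0 umax + \<omega> umax"
    and umax_ne: "umax \<noteq> v0"
    and umax_choice: "gdist E v0 v0 + \<omega> v0 < gdist E v0 umax + \<omega> umax"
    and Es: "distinct Es" "set Es = ladder V E v0 umax"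
  shows "\<forall>i < length Es.
     slice V E Es i = minority V E (Es ! i) - (\<Union>j<i. minority V E (Es ! j))
     \<and> gated V E (slice V E Es i)"
proof (intro allI impI conjI)
  interpret median V E using median by unfold_locales
  have ladder: "set Es \<subseteq> ladder V E v0 umax" using Es(2) by simp
  have classes: "set Es \<subseteq> theta_classes E" using Es(2) unfolding ladder_def by blast
  have balanced: "\<forall>C\<in>set Es. 2 * Min (card ` halfspaces V E C) < card V"
    using small classes twice_less_if_less_div_log[OF n3] by blast
  have v0_majority: "\<forall>C\<in>set Es. v0 \<notin> minority V E C"
    using v0(2) classes unfolding majority_def by blast
  fix i assume i: "i < length Es"
  show "slice V E Es i = minority V E (Es ! i) - (\<Union>j<i. minority V E (Es ! j))"
    using slice_eq[OF ladder balanced i] .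
  show "gated V E (slice V E Es i)"
    using gated_if_convex convex_slice[OF ladder balanced i]
      slice_nonempty[OF ladder balanced Es(1) v0_majority i] by blast
qed

end
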